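(* Let $G=(V,E)$ be a connected simple graph and $\pi:V\to\mathbb{N}$ an injection. For a spanning tree $T$ of $G$ define $w(T)=\sum_{uv\in E(T)}\min(\pi(u),\pi(v))$. If $T^*$ is a spanning tree of $G$ minimizing $w$, then for every edge $uv\in E(T^* )$ with $\pi(u)<\pi(v)$, the pair $(u,v)$ is good with respect to $\pi$; that is, $\pi(u)<\pi(a)$ for every common neighbour $a\in N(u)\cap N(v)$.
   Context: For a vertex $u$, $N(u)=\{v\in V: uv\in E\}$ is its open neighbourhood. Given an injection $\pi:V\to\mathbb{N}$, an ordered pair $(u,v)\in V^2$ is called good with respect to $\pi$ if $uv\in E$, $\pi(u)<\pi(v)$, and $\pi(u)<\pi(w)$ for every $w\in N(u)\cap N(v)$. *)

theory Defs
  imports Main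
begin

definition simple_graph :: "'a set \<Rightarrow> 'a set set \<Rightarrow> bool" where
  "simple_graph V E \<longleftrightarrow> finite V \<and> (\<forall>e\<in>E. \<exists>u v. e = {u, v} \<and> u \<noteq> v \<and> u \<in> V \<and> v \<in> V)"

definition walk :: "'a set set \<Rightarrow> 'a list \<Rightarrow> bool" where
  "walk E p \<longleftrightarrow> p \<noteq> [] \<and> (\<forall>i. Suc i < length p \<longrightarrow> {p ! i, p ! Suc i} \<in> E)"

definition connected_graph :: "'a set \<Rightarrow> 'a set set \<Rightarrow> bool" where
  "connected_graph V E \<longleftrightarrow> V \<noteq> {} \<and>
     (\<forall>u\<in>V. \<forall>v\<in>V. \<exists>p. walk E p \<and> set p \<subseteq> V \<and> hd p = u \<and> last p = v)"

definition has_cycle :: "'a set set \<Rightarrow> bool" where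
  "has_cycle E \<longleftrightarrow> (\<exists>p. walk E p \<and> length p \<ge> 3 \<and> distinct p \<and> {last p, hd p} \<in> E)"

definition spanning_tree :: "'a set \<Rightarrow> 'a set set \<Rightarrow> 'a set set \<Rightarrow> bool" where
  "spanning_tree V E T \<longleftrightarrow> T \<subseteq> E \<and> connected_graph V T \<and> \<not> has_cycle T"

definition nbhd :: "'a set set \<Rightarrow> 'a \<Rightarrow> 'a set" where
  "nbhd E u = {v. {u, v} \<in> E}"

definition tree_weight :: "('a \<Rightarrow> nat) \<Rightarrow> 'a set set \<Rightarrow> nat" where
  "tree_weight \<pi> T = (\<Sum>e\<in>T. Min (\<pi> ` e))"

definition good_pair :: "'a set set \<Rightarrow> ('a \<Rightarrow> nat) \<Rightarrow> 'a \<Rightarrow> 'a \<Rightarrow> bool" where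
  "good_pair E \<pi> u v \<longleftrightarrow> {u, v} \<in> E \<and> \<pi> u < \<pi> v \<and>
     (\<forall>w\<in>nbhd E u \<inter> nbhd E v. \<pi> u < \<pi> w)"

end

theory Submission
  imports Defs "HOL-Library.Transitive_Closure_Table"
begin

text \<open>Suppose uv is an edge of a minimum-weight spanning tree T* with \<pi> u < \<pi> v, and some common neighbour w
has \<pi> w < \<pi> u. Deleting uv splits T* into the component of u and that of v; w lies in one
of them and is adjacent in G to both u and v, so one of the edges wu, wv crosses the cut.
Exchanging uv for it yields a spanning tree whose weight is smaller by \<pi> u - \<pi> w,
since the new edge has minimum \<pi> w.\<close>

lemma walk_Nil [simp]: "\<not> walk F []" and walk_singleton [simp]: "walk F [a]"
  by (simp_all add: walk_def)

lemma walk_Cons_Cons [simp]: "walk F (a # b # p) \<longleftrightarrow> {a, b} \<in> F \<and> walk F (b # p)"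
  unfolding walk_def by (simp add: All_less_Suc2)

lemma walk_append_Cons: "walk F (xs @ y # ys) \<longleftrightarrow> walk F (xs @ [y]) \<and> walk F (y # ys)"
  by (induction xs rule: induct_list012) auto

lemma walk_mono: "walk F p \<Longrightarrow> F \<subseteq> G \<Longrightarrow> walk G p"
  unfolding walk_def by blast

lemma walk_insert_avoiding: "walk (insert e F) p \<Longrightarrow> \<not> e \<subseteq> set p \<Longrightarrow> walk F p"
  unfolding walk_def by (auto simp del: insert_iff)

lemma walk_insert_split:
  "walk (insert e F) p \<Longrightarrow> \<not> walk F p \<Longrightarrow> \<exists>xs c d ys. p = xs @ c # d # ys \<and> e = {c, d}"
proof (induction p rule: induct_list012)
  case (3 a b r)
  show ?case
  proof (cases "{a, b} \<in> F")
    case True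
    then obtain xs c d ys where "b # r = xs @ c # d # ys" "e = {c, d}"
      using "3.IH"(2) "3.prems" by auto
    then show ?thesis by (metis append_Cons)
  next
    case False
    then show ?thesis using "3.prems"(1) by (metis append_Nil insert_iff walk_Cons_Cons)
  qed
qed auto

definition adjacent :: "'a set set \<Rightarrow> 'a \<Rightarrow> 'a \<Rightarrow> bool" where
  "adjacent F a b \<longleftrightarrow> {a, b} \<in> F"

abbreviation reachable :: "'a set set \<Rightarrow> 'a \<Rightarrow> 'a \<Rightarrow> bool" where
  "reachable F \<equiv> (adjacent F)\<^sup>*\<^sup>*"

lemma reachable_edge: "{a, b} \<in> F \<Longrightarrow> reachable F a b"
  by (simp add: adjacent_def r_into_rtranclp)

lemma reachable_sym: "reachable F a b \<Longrightarrow> reachable F b a"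
  by (rule sympD[OF symp_rtranclp]) (auto simp: symp_def adjacent_def insert_commute)

lemma reachable_mono: "reachable F a b \<Longrightarrow> F \<subseteq> G \<Longrightarrow> reachable G a b"
  by (metis adjacent_def predicate2I rtranclp_mono subsetD predicate2D)

lemma rtrancl_path_adjacent_iff_walk:
  "rtrancl_path (adjacent F) x xs y \<longleftrightarrow> walk F (x # xs) \<and> last (x # xs) = y"
  by (induction xs arbitrary: x)
    (auto simp: adjacent_def rtrancl_path.simps[of _ _ "[]"] rtrancl_path.simps[of _ _ "_ # _"])

lemma reachable_iff_walk: "reachable F a b \<longleftrightarrow> (\<exists>p. walk F p \<and> hd p = a \<and> last p = b)"
  by (metis rtranclp_eq_rtrancl_path rtrancl_path_adjacent_iff_walk list.exhaust_sel list.sel(1) walk_Nil)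

lemma reachable_distinct_walk:
  assumes "reachable F a b"
  obtains p where "walk F p" "distinct p" "hd p = a" "last p = b"
proof -
  obtain xs where "rtrancl_path (adjacent F) a xs b"
    using assms rtranclp_eq_rtrancl_path by metis
  then obtain xs' where "rtrancl_path (adjacent F) a xs' b" "distinct (a # xs')"
    by (rule rtrancl_path_distinct)
  then show thesis using that[of "a # xs'"] by (simp add: rtrancl_path_adjacent_iff_walk)
qed

lemma has_cycle_mono: "has_cycle F \<Longrightarrow> F \<subseteq> G \<Longrightarrow> has_cycle G"
  unfolding has_cycle_def using walk_mono by blast

lemma has_cycle_insert_if_reachable:
  assumes "x \<noteq> y" and "reachable F x y" and "{x, y} \<notin> F"
  shows "has_cycle (insert {x, y} F)"
proof -
  obtain p where p: "walk F p" "distinct p" "hd p = x" "last p = y"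
    using assms(2) by (rule reachable_distinct_walk)
  have "3 \<le> length p"
    using p assms(1,3) by (cases p rule: remdups_adj.cases; cases "tl (tl p)") auto
  then show ?thesis
    unfolding has_cycle_def using p walk_mono[OF p(1)]
    by (intro exI[of _ p]) (auto simp: insert_commute)
qed

lemma reachable_if_has_cycle_insert:
  assumes cycle: "has_cycle (insert {x, y} F)" and acyclic: "\<not> has_cycle F"
  shows "reachable F x y"
proof -
  obtain p where p: "walk (insert {x, y} F) p" "3 \<le> length p" "distinct p"
      "{last p, hd p} \<in> insert {x, y} F"
    using cycle unfolding has_cycle_def by blast
  show ?thesis
  proof (cases "walk F p")
    case True
    then have "{last p, hd p} \<notin> F" using p(2,3) acyclic unfolding has_cycle_def by blast
    then have "{last p, hd p} = {x, y}" using p(4) by blast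
    moreover have "reachable F (hd p) (last p)" unfolding reachable_iff_walk using True by blast
    ultimately show ?thesis by (metis doubleton_eq_iff reachable_sym)
  next
    case False
    then obtain xs c d ys where p_split: "p = xs @ c # d # ys" and cd: "{x, y} = {c, d}"
      using walk_insert_split[OF p(1) False] by blast
    have "walk (insert {c, d} F) (xs @ [c])" "walk (insert {c, d} F) (d # ys)"
      using p(1) walk_append_Cons[of _ xs c "d # ys"] by (auto simp: p_split cd)
    moreover have "d \<notin> set (xs @ [c])" "c \<notin> set (d # ys)" using p(3) p_split by auto
    ultimately have "walk F (xs @ [c])" "walk F (d # ys)" by (auto intro: walk_insert_avoiding)
    then have "reachable F (hd p) c" "reachable F d (last p)"
      unfolding reachable_iff_walk p_split
      by (intro exI[of _ "xs @ [c]"] exI[of _ "d # ys"]; simp add: hd_append)+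
    moreover have "{last p, hd p} \<noteq> {c, d}"
      using p(2,3) unfolding p_split by (cases xs; cases ys rule: rev_cases) auto
    then have "reachable F (last p) (hd p)" using p(4) cd by (auto intro: reachable_edge)
    ultimately have "reachable F d c" by (meson rtranclp_trans)
    then show ?thesis using cd by (metis doubleton_eq_iff reachable_sym)
  qed
qed

lemma reachable_endpoint_without_edge:
  "reachable F a b \<Longrightarrow> b \<in> {x, y} \<Longrightarrow>
     reachable (F - {{x, y}}) a x \<or> reachable (F - {{x, y}}) a y"
proof (induction rule: converse_rtranclp_induct)
  case (step a z)
  show ?case
  proof (cases "{a, z} = {x, y}")
    case True
    then show ?thesis by (auto simp: doubleton_eq_iff)
  next
    case False
    then have "adjacent (F - {{x, y}}) a z" using step.hyps(1) by (simp add: adjacent_def)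
    then show ?thesis using step.IH step.prems by (meson converse_rtranclp_into_rtranclp)
  qed
qed auto

lemma simple_graph_edgeD:
  assumes "simple_graph V E" and "{a, b} \<in> E"
  shows "a \<in> V" "b \<in> V" "a \<noteq> b"
proof -
  obtain c d where "{a, b} = {c, d}" "c \<noteq> d" "c \<in> V" "d \<in> V"
    using assms unfolding simple_graph_def by blast
  then show "a \<in> V" "b \<in> V" "a \<noteq> b" by (auto simp: doubleton_eq_iff)
qed

lemma simple_graph_finite_edges:
  assumes "simple_graph V E"
  shows "finite E"
proof -
  have "E \<subseteq> Pow V" using assms unfolding simple_graph_def by auto
  moreover have "finite V" using assms unfolding simple_graph_def by simp
  ultimately show ?thesis by (meson finite_Pow_iff finite_subset)
qed

lemma walk_subset_vertices:
  assumes "simple_graph V E" "F \<subseteq> E" "walk F p" "hd p \<in> V"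
  shows "set p \<subseteq> V"
  using assms(3,4)
  by (induction p rule: induct_list012) (auto dest: subsetD[OF assms(2)] simple_graph_edgeD(2)[OF assms(1)])

lemma connected_graph_reachable:
  "connected_graph V F \<Longrightarrow> a \<in> V \<Longrightarrow> b \<in> V \<Longrightarrow> reachable F a b"
  unfolding connected_graph_def reachable_iff_walk by blast

lemma connected_graphI:
  assumes "simple_graph V E" "F \<subseteq> E" "x \<in> V" "\<And>a. a \<in> V \<Longrightarrow> reachable F a x"
  shows "connected_graph V F"
  unfolding connected_graph_def
proof (intro conjI ballI)
  fix a b assume a: "a \<in> V" and b: "b \<in> V"
  have "reachable F a b" using rtranclp_trans[OF assms(4)[OF a] reachable_sym[OF assms(4)[OF b]]] .
  then obtain p where "walk F p" "hd p = a" "last p = b" unfolding reachable_iff_walk by blast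
  moreover have "set p \<subseteq> V" using walk_subset_vertices[OF assms(1,2)] calculation a by simp
  ultimately show "\<exists>p. walk F p \<and> set p \<subseteq> V \<and> hd p = a \<and> last p = b" by blast
qed (use assms(3) in blast)

lemma spanning_tree_exchange:
  assumes G: "simple_graph V E" and T: "spanning_tree V E T"
    and xy: "{x, y} \<in> T" and wy: "reachable (T - {{x, y}}) w y" and xw: "{x, w} \<in> E"
  shows "spanning_tree V E (insert {x, w} (T - {{x, y}}))" and "{x, w} \<notin> T - {{x, y}}"
proof -
  let ?T0 = "T - {{x, y}}"
  let ?T' = "insert {x, w} ?T0"
  have TE: "T \<subseteq> E" and T_connected: "connected_graph V T" and T_acyclic: "\<not> has_cycle T"
    using T unfolding spanning_tree_def by auto
  have xyE: "{x, y} \<in> E" using xy TE by blast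
  have "x \<noteq> y" and x: "x \<in> V" using simple_graph_edgeD[OF G xyE] by auto
  have not_xw: "\<not> reachable ?T0 x w"
  proof
    assume "reachable ?T0 x w"
    then have "has_cycle (insert {x, y} ?T0)"
      by (rule has_cycle_insert_if_reachable[OF \<open>x \<noteq> y\<close> rtranclp_trans[OF _ wy]]) simp
    moreover have "insert {x, y} ?T0 = T" using xy by blast
    ultimately show False using T_acyclic by simp
  qed
  then show "{x, w} \<notin> ?T0" by (meson reachable_edge)
  have "\<not> has_cycle ?T0" by (meson Diff_subset T_acyclic has_cycle_mono)
  then have T'_acyclic: "\<not> has_cycle ?T'" by (meson not_xw reachable_if_has_cycle_insert)
  have sub: "?T0 \<subseteq> ?T'" by blast
  have yx: "reachable ?T' y x"
  proof -
    have "reachable ?T' y w" using reachable_mono[OF reachable_sym[OF wy] sub] .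
    moreover have "reachable ?T' w x" by (rule reachable_edge) (simp add: insert_commute)
    ultimately show ?thesis by (rule rtranclp_trans)
  qed
  have to_x: "reachable ?T' a x" if "a \<in> V" for a
  proof -
    have "reachable ?T0 a x \<or> reachable ?T0 a y"
      using connected_graph_reachable[OF T_connected that x] by (rule reachable_endpoint_without_edge) simp
    then show ?thesis
    proof
      assume "reachable ?T0 a x"
      then show ?thesis by (rule reachable_mono[OF _ sub])
    next
      assume "reachable ?T0 a y"
      then show ?thesis by (rule rtranclp_trans[OF reachable_mono[OF _ sub] yx])
    qed
  qed
  have T'E: "?T' \<subseteq> E" using TE xw by blast
  have "connected_graph V ?T'" by (rule connected_graphI[OF G T'E x to_x])
  with T'E T'_acyclic show "spanning_tree V E ?T'" unfolding spanning_tree_def by blast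
qed

lemma tree_weight_exchange:
  assumes "finite T" "e \<in> T" "e' \<notin> T - {e}"
  shows "tree_weight \<pi> (insert e' (T - {e})) + Min (\<pi> ` e) = tree_weight \<pi> T + Min (\<pi> ` e')"
  using assms unfolding tree_weight_def by (simp add: sum.remove)

lemma minimum_spanning_tree_exchange:
  assumes G: "simple_graph V E" and T: "spanning_tree V E T"
    and minimum: "\<And>T'. spanning_tree V E T' \<Longrightarrow> tree_weight \<pi> T \<le> tree_weight \<pi> T'"
    and xy: "{x, y} \<in> T" and wy: "reachable (T - {{x, y}}) w y" and xw: "{x, w} \<in> E"
  shows "Min (\<pi> ` {x, y}) \<le> Min (\<pi> ` {x, w})"
proof -
  have "finite T"
    using T finite_subset[OF _ simple_graph_finite_edges[OF G]] unfolding spanning_tree_def by blast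
  then have "tree_weight \<pi> (insert {x, w} (T - {{x, y}})) + Min (\<pi> ` {x, y}) =
      tree_weight \<pi> T + Min (\<pi> ` {x, w})"
    by (rule tree_weight_exchange[OF _ xy spanning_tree_exchange(2)[OF G T xy wy xw]])
  then show ?thesis using minimum[OF spanning_tree_exchange(1)[OF G T xy wy xw]] by linarith
qed

theorem mainTheorem4:
  fixes V :: "'a set" and E :: "'a set set" and \<pi> :: "'a \<Rightarrow> nat" and Tstar :: "'a set set"
  assumes "simple_graph V E"
    and "connected_graph V E"
    and "inj_on \<pi> V"
    and "spanning_tree V E Tstar"
    and "\<And>T. spanning_tree V E T \<Longrightarrow> tree_weight \<pi> Tstar \<le> tree_weight \<pi> T"
    and "{u, v} \<in> Tstar"
    and "\<pi> u < \<pi> v"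
  shows "good_pair E \<pi> u v"
proof -
  have uv: "{u, v} \<in> E" using assms(4,6) unfolding spanning_tree_def by blast
  have "\<pi> u < \<pi> w" if w: "w \<in> nbhd E u \<inter> nbhd E v" for w
  proof (rule ccontr)
    assume "\<not> \<pi> u < \<pi> w"
    have uw: "{u, w} \<in> E" and vw: "{v, w} \<in> E" using w unfolding nbhd_def by auto
    have "w \<noteq> u" "w \<in> V" "u \<in> V" using simple_graph_edgeD[OF assms(1) uw] by auto
    then have "\<pi> w \<noteq> \<pi> u" using inj_onD[OF assms(3)] by blast
    with \<open>\<not> \<pi> u < \<pi> w\<close> have "\<pi> w < \<pi> u" by simp
    have "reachable Tstar w u"
      using assms(4) \<open>w \<in> V\<close> \<open>u \<in> V\<close> unfolding spanning_tree_def
      by (auto intro: connected_graph_reachable)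
    then have "reachable (Tstar - {{u, v}}) w u \<or> reachable (Tstar - {{u, v}}) w v"
      by (rule reachable_endpoint_without_edge) simp
    then obtain x y where "{x, y} = {u, v}" "x \<in> {u, v}" "reachable (Tstar - {{x, y}}) w y" "{x, w} \<in> E"
      using uw vw by (auto simp: insert_commute)
    then have "Min (\<pi> ` {u, v}) \<le> Min (\<pi> ` {x, w})"
      using minimum_spanning_tree_exchange[OF assms(1,4,5)] assms(6) by metis
    then show False using \<open>\<pi> w < \<pi> u\<close> \<open>x \<in> {u, v}\<close> assms(7) by auto
  qed
  then show ?thesis unfolding good_pair_def using uv assms(7) by blast
qed

end
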